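(* Let $\{X_t\},\{Y_t\}$ ($t\in T$) be stochastic processes with finite second moments such that $X_t\le_{\textnormal{d-ast}}Y_t$ as $t\to\infty$. Let $\psi:\mathbb{R}\to\mathbb{R}$ be strictly increasing and Lipschitz continuous, with $\psi(X_t)$, $\psi(Y_t)$ having finite second moments for all $t$. If there exist $C>0$ and $t_0\in T$ with $\mathcal{W}_2^2(F_{X_t},F_{Y_t})\le C\,\mathcal{W}_2^2(F_{\psi(X_t)},F_{\psi(Y_t)})$ for all $t\ge t_0$, then $\psi(X_t)\le_{\textnormal{d-ast}}\psi(Y_t)$ as $t\to\infty$.
   Context: $T\subseteq\mathbb{R}$ is unbounded above; limits along $t\in T$. $F^{-1}(u)=\inf\{x:F(x)\ge u\}$. $\mathcal{W}_2(F,G)=(\int_0^1(F^{-1}-G^{-1})^2du)^{1/2}$. $\varepsilon_{\mathcal{W}_2}(F,G)=\mathcal{W}_2^{-2}(F,G)\int_{\{u\in(0,1):F^{-1}(u)>G^{-1}(u)\}}(F^{-1}-G^{-1})^2du$, set to $0$ if $\mathcal{W}_2(F,G)=0$. $X_t\le_{\textnormal{d-ast}}Y_t$ means $\lim_{t\to\infty}\varepsilon_{\mathcal{W}_2}(F_{X_t},F_{Y_t})=0$. *)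

theory Defs
  imports "HOL-Probability.Probability"
begin

definition dist_fun :: "'a measure \<Rightarrow> ('a \<Rightarrow> real) \<Rightarrow> real \<Rightarrow> real" where
  "dist_fun M X = (\<lambda>x. measure M {\<omega> \<in> space M. X \<omega> \<le> x})"

definition quantile :: "(real \<Rightarrow> real) \<Rightarrow> real \<Rightarrow> real" where
  "quantile F u = Inf {x. F x \<ge> u}"

definition W2sq :: "(real \<Rightarrow> real) \<Rightarrow> (real \<Rightarrow> real) \<Rightarrow> real" where
  "W2sq F G = (LBINT u:{0<..<1::real}. (quantile F u - quantile G u)\<^sup>2)"

definition eps_W2 :: "(real \<Rightarrow> real) \<Rightarrow> (real \<Rightarrow> real) \<Rightarrow> real" where
  "eps_W2 F G = (if W2sq F G = 0 then 0 else
     (LBINT u:{u\<in>{0<..<1::real}. quantile F u > quantile G u}. (quantile F u - quantile G u)\<^sup>2)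
       / W2sq F G)"

definition d_ast_le :: "real set \<Rightarrow> 'a measure \<Rightarrow> (real \<Rightarrow> 'a \<Rightarrow> real) \<Rightarrow> (real \<Rightarrow> 'a \<Rightarrow> real) \<Rightarrow> bool" where
  "d_ast_le T M X Y \<longleftrightarrow>
     ((\<lambda>t. eps_W2 (dist_fun M (X t)) (dist_fun M (Y t))) \<longlongrightarrow> 0) (at_top \<sqinter> principal T)"

end

theory Submission
  imports Defs
begin

text \<open>On the open unit interval the quantile function of \<open>\<psi>(Z)\<close> is \<open>\<psi>\<close> composed with the
quantile function of \<open>Z\<close>, because \<open>\<psi>\<close> is strictly increasing and continuous. Monotonicity
of \<open>\<psi>\<close> therefore keeps the violation set \<open>{F\<^sup>-\<^sup>1 > G\<^sup>-\<^sup>1}\<close> unchanged, and the Lipschitz bound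
shows that the violation integral of \<open>\<psi>(X\<^sub>t), \<psi>(Y\<^sub>t)\<close> is at most \<open>L\<^sup>2\<close> times that of
\<open>X\<^sub>t, Y\<^sub>t\<close>. Dividing by \<open>W\<^sub>2\<^sup>2(\<psi>(X\<^sub>t), \<psi>(Y\<^sub>t)) \<ge> W\<^sub>2\<^sup>2(X\<^sub>t, Y\<^sub>t) / C\<close> gives
\<open>\<epsilon>(\<psi>(X\<^sub>t), \<psi>(Y\<^sub>t)) \<le> L\<^sup>2 C \<epsilon>(X\<^sub>t, Y\<^sub>t)\<close> for large \<open>t\<close>, and the claim follows by squeezing.\<close>

definition lborel_01 :: "real measure" where
  "lborel_01 = restrict_space lborel {0<..<1}"

lemma space_lborel_01: "space lborel_01 = {0<..<1}"
  by (simp add: lborel_01_def space_restrict_space)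

lemma set_integral_eq_integral_lborel_01:
  fixes f :: "real \<Rightarrow> real"
  shows "(LBINT u:{0<..<1}. f u) = integral\<^sup>L lborel_01 f"
  unfolding set_lebesgue_integral_def lborel_01_def
  using integral_restrict_space[of "{0<..<1::real}" lborel f] by simp

lemma set_integral_violation_eq_integral_lborel_01:
  fixes a b :: "real \<Rightarrow> real"
  shows "(LBINT u:{u\<in>{0<..<1}. a u > b u}. (a u - b u)\<^sup>2)
           = integral\<^sup>L lborel_01 (\<lambda>u. (max (a u - b u) 0)\<^sup>2)"
  unfolding set_lebesgue_integral_def lborel_01_def
  using integral_restrict_space[of "{0<..<1::real}" lborel "\<lambda>u. (max (a u - b u) 0)\<^sup>2"]
  by (auto intro!: Bochner_Integration.integral_cong simp: indicator_def max_def)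

lemma dist_fun_eq_cdf:
  assumes "Z \<in> borel_measurable M"
  shows "dist_fun M Z = cdf (distr M borel Z)"
  unfolding dist_fun_def cdf_def
  using assms by (intro ext) (simp add: measure_distr vimage_def Int_def conj_commute)

lemma cdf_distribution_distr:
  assumes "prob_space M" and "Z \<in> borel_measurable M"
  shows "cdf_distribution (distr M borel Z)"
  using prob_space.real_distribution_distr[OF assms] by (simp add: cdf_distribution_def)

lemma quantile_dist_fun_eq:
  assumes "Z \<in> borel_measurable M"
  shows "quantile (dist_fun M Z) = (\<lambda>u. Inf {x. u \<le> cdf (distr M borel Z) x})"
  unfolding quantile_def dist_fun_eq_cdf[OF assms] ..

lemma measurable_quantile_dist_fun:
  assumes "prob_space M" and "Z \<in> borel_measurable M"
  shows "quantile (dist_fun M Z) \<in> borel_measurable lborel_01"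
  unfolding quantile_dist_fun_eq[OF assms(2)] lborel_01_def
  using cdf_distribution.measurable_CI[OF cdf_distribution_distr[OF assms]]
  by (subst measurable_cong_sets[OF sets_restrict_space_cong[OF sets_lborel] refl])

lemma quantile_dist_fun_le_iff:
  assumes "prob_space M" and "Z \<in> borel_measurable M" and "u \<in> {0<..<1}"
  shows "quantile (dist_fun M Z) u \<le> x \<longleftrightarrow> u \<le> dist_fun M Z x"
proof -
  interpret cdf_distribution "distr M borel Z"
    using cdf_distribution_distr[OF assms(1,2)] .
  show ?thesis
    unfolding quantile_def dist_fun_eq_cdf[OF assms(2)]
    using pseudoinverse[of u x] assms(3) by auto
qed

lemma distr_quantile_dist_fun:
  assumes "prob_space M" and "Z \<in> borel_measurable M"
  shows "distr lborel_01 borel (quantile (dist_fun M Z)) = distr M borel Z"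
  unfolding quantile_dist_fun_eq[OF assms(2)] lborel_01_def
  using cdf_distribution.distr_I_eq_M[OF cdf_distribution_distr[OF assms]] .

lemma integrable_quantile_dist_fun_sq:
  assumes P: "prob_space M" and Z: "Z \<in> borel_measurable M"
    and int: "integrable M (\<lambda>\<omega>. (Z \<omega>)\<^sup>2)"
  shows "integrable lborel_01 (\<lambda>u. (quantile (dist_fun M Z) u)\<^sup>2)"
proof -
  have "integrable (distr M borel Z) (\<lambda>x. x\<^sup>2)"
    using int Z by (subst integrable_distr_eq) auto
  then have "integrable (distr lborel_01 borel (quantile (dist_fun M Z))) (\<lambda>x. x\<^sup>2)"
    unfolding distr_quantile_dist_fun[OF P Z] .
  then show ?thesis
    using measurable_quantile_dist_fun[OF P Z] by (subst (asm) integrable_distr_eq) auto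
qed

lemma integrable_diff_sq:
  fixes a b :: "'a \<Rightarrow> real"
  assumes "a \<in> borel_measurable N" "b \<in> borel_measurable N"
    and "integrable N (\<lambda>u. (a u)\<^sup>2)" "integrable N (\<lambda>u. (b u)\<^sup>2)"
  shows "integrable N (\<lambda>u. (a u - b u)\<^sup>2)"
proof (rule Bochner_Integration.integrable_bound)
  show "integrable N (\<lambda>u. 2 * (a u)\<^sup>2 + 2 * (b u)\<^sup>2)"
    using assms(3,4) by auto
  have "(a u - b u)\<^sup>2 \<le> 2 * (a u)\<^sup>2 + 2 * (b u)\<^sup>2" for u
    using zero_le_power2[of "a u + b u"] by (simp add: power2_eq_square algebra_simps)
  then show "AE u in N. norm ((a u - b u)\<^sup>2) \<le> norm (2 * (a u)\<^sup>2 + 2 * (b u)\<^sup>2)"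
    by simp
qed (use assms(1,2) in measurable)

lemma quantile_dist_fun_comp:
  assumes P: "prob_space M" and Z: "Z \<in> borel_measurable M"
    and \<psi>: "strict_mono \<psi>" "continuous_on UNIV \<psi>" and u: "u \<in> {0<..<1}"
  shows "quantile (dist_fun M (\<lambda>\<omega>. \<psi> (Z \<omega>))) u = \<psi> (quantile (dist_fun M Z) u)"
proof -
  interpret prob_space M by fact
  define q where "q = quantile (dist_fun M Z) u"
  have q_le_iff: "q \<le> x \<longleftrightarrow> u \<le> dist_fun M Z x" for x
    unfolding q_def using quantile_dist_fun_le_iff[OF P Z u] .
  have [measurable]: "\<psi> \<in> borel_measurable borel"
    using \<psi>(2) by (rule borel_measurable_continuous_onI)
  have sets_Z: "{\<omega> \<in> space M. Z \<omega> \<le> x} \<in> sets M" for x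
    using Z by measurable
  show ?thesis
    unfolding q_def[symmetric] quantile_def[of "dist_fun M (\<lambda>\<omega>. \<psi> (Z \<omega>))"]
  proof (rule cInf_eq_minimum)
    have "{\<omega> \<in> space M. \<psi> (Z \<omega>) \<le> \<psi> q} = {\<omega> \<in> space M. Z \<omega> \<le> q}"
      using \<psi>(1) by (auto simp: strict_mono_less_eq)
    then show "\<psi> q \<in> {y. u \<le> dist_fun M (\<lambda>\<omega>. \<psi> (Z \<omega>)) y}"
      using q_le_iff[of q] by (simp add: dist_fun_def)
  next
    fix y assume "y \<in> {y. u \<le> dist_fun M (\<lambda>\<omega>. \<psi> (Z \<omega>)) y}"
    then have u_le: "u \<le> dist_fun M (\<lambda>\<omega>. \<psi> (Z \<omega>)) y" by simp
    show "\<psi> q \<le> y"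
    proof (rule ccontr)
      assume "\<not> \<psi> q \<le> y"
      \<comment> \<open>By left continuity of \<open>\<psi>\<close> at \<open>q\<close> some \<open>x < q\<close> still has \<open>y < \<psi> x\<close>.\<close>
      then have "(\<psi> \<longlongrightarrow> \<psi> q) (at_left q)" and "y < \<psi> q"
        using \<psi>(2) by (auto simp: continuous_on_eq_continuous_at isCont_def filterlim_at_split)
      then have "eventually (\<lambda>x. y < \<psi> x \<and> x < q) (at_left q)"
        using eventually_at_left_real[of "q - 1" q]
        by (intro eventually_conj order_tendstoD(1)) (auto elim: eventually_mono)
      then obtain x where x: "y < \<psi> x" "x < q"
        using eventually_happens[of _ "at_left q"] by (auto simp: trivial_limit_at_left_real)
      have "Z \<omega> \<le> x" if "\<psi> (Z \<omega>) \<le> y" for \<omega>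
        using that x(1) strict_mono_less[OF \<psi>(1), of "Z \<omega>" x] by simp
      then have "{\<omega> \<in> space M. \<psi> (Z \<omega>) \<le> y} \<subseteq> {\<omega> \<in> space M. Z \<omega> \<le> x}"
        by blast
      then have "dist_fun M (\<lambda>\<omega>. \<psi> (Z \<omega>)) y \<le> dist_fun M Z x"
        unfolding dist_fun_def using sets_Z by (intro finite_measure_mono) auto
      with u_le q_le_iff[of x] x(2) show False by simp
    qed
  qed
qed

definition W2_violation :: "(real \<Rightarrow> real) \<Rightarrow> (real \<Rightarrow> real) \<Rightarrow> real" where
  "W2_violation F G =
     (LBINT u:{u\<in>{0<..<1}. quantile F u > quantile G u}. (quantile F u - quantile G u)\<^sup>2)"

lemma eps_W2_eq_violation:
  "eps_W2 F G = (if W2sq F G = 0 then 0 else W2_violation F G / W2sq F G)"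
  unfolding eps_W2_def W2_violation_def ..

lemma W2sq_nonneg: "0 \<le> W2sq F G"
  unfolding W2sq_def set_integral_eq_integral_lborel_01 by simp

lemma W2_violation_nonneg: "0 \<le> W2_violation F G"
  unfolding W2_violation_def set_integral_violation_eq_integral_lborel_01 by simp

lemma eps_W2_nonneg: "0 \<le> eps_W2 F G"
  unfolding eps_W2_eq_violation using W2sq_nonneg W2_violation_nonneg by simp

lemma eps_W2_le_scaled:
  assumes viol: "W2_violation F' G' \<le> K * W2_violation F G"
    and viol_le: "W2_violation F G \<le> W2sq F G"
    and W: "W2sq F G \<le> C * W2sq F' G'" and C: "C > 0" and K: "K \<ge> 0"
  shows "eps_W2 F' G' \<le> K * C * eps_W2 F G"
proof (cases "W2sq F' G' = 0 \<or> W2sq F G = 0")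
  case True
  then have "eps_W2 F' G' = 0"
    using viol viol_le W2_violation_nonneg[of F' G'] W2_violation_nonneg[of F G] K
    by (auto simp: eps_W2_eq_violation mult_nonneg_nonpos)
  then show ?thesis using eps_W2_nonneg[of F G] C K by simp
next
  case False
  then have pos: "0 < W2sq F' G'" "0 < W2sq F G"
    using W2sq_nonneg[of F' G'] W2sq_nonneg[of F G] by auto
  have "W2_violation F' G' / W2sq F' G' \<le> K * W2_violation F G / (W2sq F G / C)"
    using viol W W2_violation_nonneg[of F G] pos C K
    by (intro frac_le) (auto simp: pos_divide_le_eq mult.commute)
  then show ?thesis
    using False C by (simp add: eps_W2_eq_violation ac_simps)
qed

lemma W2_violation_le_W2sq:
  assumes [measurable]: "quantile F \<in> borel_measurable lborel_01" "quantile G \<in> borel_measurable lborel_01"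
    and int: "integrable lborel_01 (\<lambda>u. (quantile F u - quantile G u)\<^sup>2)"
  shows "W2_violation F G \<le> W2sq F G"
proof -
  have le: "(max (quantile F u - quantile G u) 0)\<^sup>2 \<le> (quantile F u - quantile G u)\<^sup>2" for u
    by (auto simp: max_def)
  have "integrable lborel_01 (\<lambda>u. (max (quantile F u - quantile G u) 0)\<^sup>2)"
    by (rule Bochner_Integration.integrable_bound[OF int]) (auto simp: le)
  then show ?thesis
    unfolding W2_violation_def W2sq_def set_integral_violation_eq_integral_lborel_01
      set_integral_eq_integral_lborel_01
    using int le by (rule integral_mono)
qed

lemma pos_part_diff_le_lipschitz:
  assumes "mono \<psi>" and lip: "L-lipschitz_on UNIV \<psi>"
  shows "max (\<psi> x - \<psi> y) 0 \<le> L * max (x - y) 0"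
proof (cases "x > y")
  case True
  have "\<psi> x - \<psi> y \<le> dist (\<psi> x) (\<psi> y)" by (simp add: dist_real_def)
  also have "\<dots> \<le> L * dist x y" using lip by (rule lipschitz_onD) auto
  finally show ?thesis
    using True lipschitz_on_nonneg[OF lip] by (auto simp: dist_real_def max_def)
next
  case False
  then show ?thesis
    using \<open>mono \<psi>\<close> lipschitz_on_nonneg[OF lip] by (auto simp: monoD)
qed

lemma W2_violation_comp_le:
  assumes meas: "quantile F \<in> borel_measurable lborel_01" "quantile G \<in> borel_measurable lborel_01"
    and int: "integrable lborel_01 (\<lambda>u. (quantile F u - quantile G u)\<^sup>2)"
    and F': "\<And>u. u \<in> {0<..<1} \<Longrightarrow> quantile F' u = \<psi> (quantile F u)"
    and G': "\<And>u. u \<in> {0<..<1} \<Longrightarrow> quantile G' u = \<psi> (quantile G u)"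
    and mono: "mono \<psi>" and lip: "L-lipschitz_on UNIV \<psi>"
  shows "W2_violation F' G' \<le> L\<^sup>2 * W2_violation F G"
proof -
  define a b where "a = quantile F" and "b = quantile G"
  have [measurable]: "a \<in> borel_measurable lborel_01" "b \<in> borel_measurable lborel_01"
    using meas by (simp_all add: a_def b_def)
  have [measurable]: "\<psi> \<in> borel_measurable borel"
    using lipschitz_on_continuous_on[OF lip] by (rule borel_measurable_continuous_onI)
  have le: "(max (\<psi> (a u) - \<psi> (b u)) 0)\<^sup>2 \<le> L\<^sup>2 * (max (a u - b u) 0)\<^sup>2" for u
  proof -
    have "(max (\<psi> (a u) - \<psi> (b u)) 0)\<^sup>2 \<le> (L * max (a u - b u) 0)\<^sup>2"
      using pos_part_diff_le_lipschitz[OF mono lip] by (intro power_mono) auto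
    then show ?thesis by (simp add: power_mult_distrib)
  qed
  have le_sq: "(max (a u - b u) 0)\<^sup>2 \<le> (a u - b u)\<^sup>2" for u
    by (auto simp: max_def)
  have int_a_b: "integrable lborel_01 (\<lambda>u. (max (a u - b u) 0)\<^sup>2)"
    by (rule Bochner_Integration.integrable_bound[OF int[folded a_def b_def]]) (auto simp: le_sq)
  have int_\<psi>: "integrable lborel_01 (\<lambda>u. (max (\<psi> (a u) - \<psi> (b u)) 0)\<^sup>2)"
    by (rule Bochner_Integration.integrable_bound[of _ "\<lambda>u. L\<^sup>2 * (max (a u - b u) 0)\<^sup>2"])
       (use int_a_b le in auto)
  have "W2_violation F' G' = integral\<^sup>L lborel_01 (\<lambda>u. (max (quantile F' u - quantile G' u) 0)\<^sup>2)"
    unfolding W2_violation_def set_integral_violation_eq_integral_lborel_01 ..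
  also have "\<dots> = integral\<^sup>L lborel_01 (\<lambda>u. (max (\<psi> (a u) - \<psi> (b u)) 0)\<^sup>2)"
    by (intro Bochner_Integration.integral_cong) (auto simp: space_lborel_01 F' G' a_def b_def)
  also have "\<dots> \<le> L\<^sup>2 * integral\<^sup>L lborel_01 (\<lambda>u. (max (a u - b u) 0)\<^sup>2)"
    using int_\<psi> int_a_b le by (subst integral_mult_right_zero[symmetric]) (rule integral_mono, auto)
  also have "\<dots> = L\<^sup>2 * W2_violation F G"
    unfolding W2_violation_def set_integral_violation_eq_integral_lborel_01 a_def b_def ..
  finally show ?thesis .
qed

lemma eps_W2_dist_fun_comp_le:
  assumes P: "prob_space M"
    and X: "X \<in> borel_measurable M" "integrable M (\<lambda>\<omega>. (X \<omega>)\<^sup>2)"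
    and Y: "Y \<in> borel_measurable M" "integrable M (\<lambda>\<omega>. (Y \<omega>)\<^sup>2)"
    and \<psi>: "strict_mono \<psi>" and lip: "L-lipschitz_on UNIV \<psi>" and C: "C > 0"
    and W: "W2sq (dist_fun M X) (dist_fun M Y)
              \<le> C * W2sq (dist_fun M (\<lambda>\<omega>. \<psi> (X \<omega>))) (dist_fun M (\<lambda>\<omega>. \<psi> (Y \<omega>)))"
  shows "eps_W2 (dist_fun M (\<lambda>\<omega>. \<psi> (X \<omega>))) (dist_fun M (\<lambda>\<omega>. \<psi> (Y \<omega>)))
           \<le> L\<^sup>2 * C * eps_W2 (dist_fun M X) (dist_fun M Y)"
proof (rule eps_W2_le_scaled[OF _ _ W C])
  note meas = measurable_quantile_dist_fun[OF P X(1)] measurable_quantile_dist_fun[OF P Y(1)]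
  have int: "integrable lborel_01
               (\<lambda>u. (quantile (dist_fun M X) u - quantile (dist_fun M Y) u)\<^sup>2)"
    using meas integrable_quantile_dist_fun_sq[OF P X] integrable_quantile_dist_fun_sq[OF P Y]
    by (rule integrable_diff_sq)
  have cont: "continuous_on UNIV \<psi>"
    using lip by (rule lipschitz_on_continuous_on)
  show "W2_violation (dist_fun M (\<lambda>\<omega>. \<psi> (X \<omega>))) (dist_fun M (\<lambda>\<omega>. \<psi> (Y \<omega>)))
          \<le> L\<^sup>2 * W2_violation (dist_fun M X) (dist_fun M Y)"
    using meas int quantile_dist_fun_comp[OF P X(1) \<psi> cont]
      quantile_dist_fun_comp[OF P Y(1) \<psi> cont] strict_mono_mono[OF \<psi>] lip
    by (rule W2_violation_comp_le)
  show "W2_violation (dist_fun M X) (dist_fun M Y) \<le> W2sq (dist_fun M X) (dist_fun M Y)"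
    using meas int by (rule W2_violation_le_W2sq)
qed simp

theorem theorem2p6:
  fixes T :: "real set" and M :: "'a measure"
    and X Y :: "real \<Rightarrow> 'a \<Rightarrow> real" and \<psi> :: "real \<Rightarrow> real"
  assumes "prob_space M"
    and "\<forall>b. \<exists>t\<in>T. t \<ge> b"
    and "\<And>t. t \<in> T \<Longrightarrow> X t \<in> borel_measurable M"
    and "\<And>t. t \<in> T \<Longrightarrow> Y t \<in> borel_measurable M"
    and "\<And>t. t \<in> T \<Longrightarrow> integrable M (\<lambda>\<omega>. (X t \<omega>)\<^sup>2)"
    and "\<And>t. t \<in> T \<Longrightarrow> integrable M (\<lambda>\<omega>. (Y t \<omega>)\<^sup>2)"
    and "d_ast_le T M X Y"
    and "strict_mono \<psi>"
    and "\<exists>L. L-lipschitz_on UNIV \<psi>"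
    and "\<And>t. t \<in> T \<Longrightarrow> integrable M (\<lambda>\<omega>. (\<psi> (X t \<omega>))\<^sup>2)"
    and "\<And>t. t \<in> T \<Longrightarrow> integrable M (\<lambda>\<omega>. (\<psi> (Y t \<omega>))\<^sup>2)"
    and "\<exists>C>0. \<exists>t0\<in>T. \<forall>t\<in>T. t \<ge> t0 \<longrightarrow>
           W2sq (dist_fun M (X t)) (dist_fun M (Y t))
             \<le> C * W2sq (dist_fun M (\<lambda>\<omega>. \<psi> (X t \<omega>))) (dist_fun M (\<lambda>\<omega>. \<psi> (Y t \<omega>)))"
  shows "d_ast_le T M (\<lambda>t \<omega>. \<psi> (X t \<omega>)) (\<lambda>t \<omega>. \<psi> (Y t \<omega>))"
proof -
  obtain L where lip: "L-lipschitz_on UNIV \<psi>" using assms(9) by blast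
  obtain C t0 where C: "C > 0" and W: "\<forall>t\<in>T. t \<ge> t0 \<longrightarrow>
      W2sq (dist_fun M (X t)) (dist_fun M (Y t))
        \<le> C * W2sq (dist_fun M (\<lambda>\<omega>. \<psi> (X t \<omega>))) (dist_fun M (\<lambda>\<omega>. \<psi> (Y t \<omega>)))"
    using assms(12) by blast
  let ?F = "at_top \<sqinter> principal T"
  let ?\<epsilon> = "\<lambda>t. eps_W2 (dist_fun M (X t)) (dist_fun M (Y t))"
  let ?\<epsilon>\<psi> = "\<lambda>t. eps_W2 (dist_fun M (\<lambda>\<omega>. \<psi> (X t \<omega>))) (dist_fun M (\<lambda>\<omega>. \<psi> (Y t \<omega>)))"
  have bound: "?\<epsilon>\<psi> t \<le> L\<^sup>2 * C * ?\<epsilon> t" if t: "t \<in> T" "t \<ge> t0" for t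
    using assms(3,5)[OF t(1)] assms(4,6)[OF t(1)] W t
    by (intro eps_W2_dist_fun_comp_le[OF assms(1) _ _ _ _ assms(8) lip C]) auto
  have "eventually (\<lambda>t. t \<in> T \<and> t \<ge> t0) ?F"
    unfolding eventually_inf_principal by (rule eventually_mono[OF eventually_ge_at_top]) auto
  then have le: "eventually (\<lambda>t. ?\<epsilon>\<psi> t \<le> L\<^sup>2 * C * ?\<epsilon> t) ?F"
    by (rule eventually_mono) (use bound in blast)
  have nonneg: "eventually (\<lambda>t. 0 \<le> ?\<epsilon>\<psi> t) ?F"
    by (simp add: eps_W2_nonneg)
  have lim: "((\<lambda>t. L\<^sup>2 * C * ?\<epsilon> t) \<longlongrightarrow> 0) ?F"
    using tendsto_mult_right_zero[of ?\<epsilon> ?F "L\<^sup>2 * C"] assms(7) by (simp add: d_ast_le_def)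
  show ?thesis
    unfolding d_ast_le_def using tendsto_sandwich[OF nonneg le tendsto_const lim] .
qed

end
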